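(* Let $(D,D_{t'})$ be a proper pair (in the sense allowing contemporaneous effects, with $D$ a tailed directed graph on $V\cup W$ and $t'\geq 1$) and assume the $d$-separation Markov property holds in $D_{t'}$ for the time series with baseline variables $X$ with index sets $(V,W)$. Let $A,C\subseteq V\cup W$ and $B\subseteq V$ be pairwise disjoint. If $A\cap \mathrm{an}_\bullet(B)=\emptyset$ and $(\mathrm{an}^V_\bullet(B)\cap C)\cup B$ is $\delta$-separated from $A$ given $C\setminus \mathrm{an}^V_\bullet(B)$ in $D$, then $X^B$ is locally independent of $X^A$ given $X^C$ until time $t'$.
   Context: Time series with baseline variables: $V$, $W$ finite disjoint index sets; $X=\{X_t\}_{t\ge0}$ with $X_0$ a random vector indexed by $V\cup W$ and $X_t$ ($t\ge1$) indexed by $V$. $X_t^A$ is the subvector indexed by $A$; $\overline X_t^A=\{X_s^i:i\in A,s\le t\}$ (baseline variables only at $s=0$). Local independence: for pairwise disjoint $A,B,C\subseteq V\cup W$ with $B\subseteq V$, $X^B$ is locally independent of $X^A$ given $X^C$ until time $t'$ if for every $t=1,\dots,t'$, $\overline X^A_{t-1}$ and $X_t^B$ are conditionally independent given $\overline X^{B\cup C}_{t-1}$. Tailed directed graph: a graph on $V\cup W$ with directed edges $i\to j$ and tailed directed edges $i\bullet\!\!\to j$; $i\ast\!\!\to j$ means $i\to j$ or $i\bullet\!\!\to j$ (if $i\bullet\!\!\to j$ is present, $i\to j$ is omitted). Only baseline nodes have edges into baseline nodes, and these are tailed. $D^-$ is the DG with $i\to j$ iff $i\ast\!\!\to j$ in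 $D$. $\mathrm{an}_\bullet(B)$: nodes $k$ with a directed path $k\bullet\!\!\to\cdots\bullet\!\!\to j$, $j\in B$, of tailed edges only; $\mathrm{de}_\bullet(B)$: nodes reachable from $B$ by such paths; $\mathrm{pa}_\bullet(B)$: nodes $k$ with $k\bullet\!\!\to j$, $j\in B$; by convention these three sets exclude $B$. $\mathrm{an}^V_\bullet(B)=\mathrm{an}_\bullet(B)\cap V$. DG terminology: path = walk without repeated nodes; collider = non-endpoint node with both adjacent edges pointing into it; $\mathrm{an}(C)$ = nodes with a directed path to $C$ (excluding the endpoint itself), $\mathrm{an}^+(C)=\mathrm{an}(C)\cup C$. $\delta$-separation in a DG $G$: with $G^B$ obtained by deleting all edges $i\to j$ with $i\in B$, $B$ is $\delta$-separated from $A$ given $C$ if every path in $G^B$ between $A$ and $B$ contains a noncollider in $C$ or a collider not in $\mathrm{an}_G(C)\cup C$. In a tailed directed graph $D$, $\delta$-separation means $\delta$-separation in $D^-$. $d$-separation in a DAG: same condition on paths of the DAG, no deletion. Unrolling (contemporaneous): the unrolled version of tailed directed graph $D$ on $t'$ lags is the DAG $D_{t'}$ on $V^{t'}\cup W^{t'}$, $V^{t'}=\bigcup_{i\in V}\{\nu_0^i,\dots,\nu^i_{t'}\}$, $W^{t'}=\{\nu_0^i:i\in W\}$, with $\nu_s^i\to\nu_t^j$ if $s<t$ and $i\ast\!\!\to j$, and $\nu_t^i\to\nu_t^j$ if $i\bullet\!\!\to j$. Rolling: the rolled version of a DAG $D_{t'}$ on such nodes is the tailed directed graph with $i\ast\!\!\to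 j$ if $\nu_s^i\to\nu_t^j$ for some $s\le t$, and $i\bullet\!\!\to j$ iff $\nu_t^i\to\nu_t^j$ for some $t$. Standing assumption: if $\nu_t^i\to\nu_t^j$ is present then so is $\nu_s^i\to\nu_u^j$ for some $s<u$. $(D,D_{t'})$ is proper if $D$ is the rolled version of $D_{t'}$ or $D_{t'}$ is the unrolled version of $D$. Node $\nu_s^i$ represents $X_s^i$. The $d$-separation Markov property holds in $D_{t'}$ if $d$-separation of node sets $a,b$ by $c$ implies conditional independence of the corresponding variables given those of $c$. *)

theory Defs
  imports "HOL-Probability.Probability"
begin

text \<open>A tailed directed graph on node set V \<union> W is given by two relations:
  E i j means i *-> j (a directed or tailed edge), T i j means i \<bullet>-> j (tailed edge).
  Since if i \<bullet>-> j is present the plain edge is omitted, E i j and \<not> T i j means a plain edge i -> j.\<close>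

definition tailed_dg :: "'n set \<Rightarrow> 'n set \<Rightarrow> ('n \<Rightarrow> 'n \<Rightarrow> bool) \<Rightarrow> ('n \<Rightarrow> 'n \<Rightarrow> bool) \<Rightarrow> bool" where
  "tailed_dg V W E T \<longleftrightarrow>
     (\<forall>i j. E i j \<longrightarrow> i \<in> V \<union> W \<and> j \<in> V \<union> W) \<and>
     (\<forall>i j. T i j \<longrightarrow> E i j) \<and>
     (\<forall>i j. E i j \<and> j \<in> W \<longrightarrow> i \<in> W \<and> T i j)"

definition tailed_an :: "('n \<Rightarrow> 'n \<Rightarrow> bool) \<Rightarrow> 'n set \<Rightarrow> 'n set" where
  "tailed_an T B = {k. \<exists>j\<in>B. T\<^sup>+\<^sup>+ k j} - B"

definition unrolled_nodes :: "'n set \<Rightarrow> 'n set \<Rightarrow> nat \<Rightarrow> ('n \<times> nat) set" where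
  "unrolled_nodes V W t' = {(i, s). i \<in> V \<and> s \<le> t'} \<union> {(i, 0) | i. i \<in> W}"

definition unroll :: "'n set \<Rightarrow> 'n set \<Rightarrow> ('n \<Rightarrow> 'n \<Rightarrow> bool) \<Rightarrow> ('n \<Rightarrow> 'n \<Rightarrow> bool) \<Rightarrow> nat
    \<Rightarrow> ('n \<times> nat) \<Rightarrow> ('n \<times> nat) \<Rightarrow> bool" where
  "unroll V W E T t' x y \<longleftrightarrow>
     x \<in> unrolled_nodes V W t' \<and> y \<in> unrolled_nodes V W t' \<and>
     ((snd x < snd y \<and> E (fst x) (fst y)) \<or> (snd x = snd y \<and> T (fst x) (fst y)))"

definition ts_dag :: "'n set \<Rightarrow> 'n set \<Rightarrow> nat \<Rightarrow> (('n \<times> nat) \<Rightarrow> ('n \<times> nat) \<Rightarrow> bool) \<Rightarrow> bool" where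
  "ts_dag V W t' G \<longleftrightarrow>
     (\<forall>x y. G x y \<longrightarrow> x \<in> unrolled_nodes V W t' \<and> y \<in> unrolled_nodes V W t' \<and> snd x \<le> snd y) \<and>
     (\<forall>x. \<not> G\<^sup>+\<^sup>+ x x)"

definition is_rolled :: "('n \<Rightarrow> 'n \<Rightarrow> bool) \<Rightarrow> ('n \<Rightarrow> 'n \<Rightarrow> bool) \<Rightarrow> (('n \<times> nat) \<Rightarrow> ('n \<times> nat) \<Rightarrow> bool) \<Rightarrow> bool" where
  "is_rolled E T G \<longleftrightarrow>
     (\<forall>i j. E i j \<longleftrightarrow> (\<exists>s t. s \<le> t \<and> G (i, s) (j, t))) \<and>
     (\<forall>i j. T i j \<longleftrightarrow> (\<exists>t. G (i, t) (j, t)))"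

definition standing_assumption :: "(('n \<times> nat) \<Rightarrow> ('n \<times> nat) \<Rightarrow> bool) \<Rightarrow> bool" where
  "standing_assumption G \<longleftrightarrow>
     (\<forall>i j t. G (i, t) (j, t) \<longrightarrow> (\<exists>s u. s < u \<and> G (i, s) (j, u)))"

definition proper_pair :: "'n set \<Rightarrow> 'n set \<Rightarrow> ('n \<Rightarrow> 'n \<Rightarrow> bool) \<Rightarrow> ('n \<Rightarrow> 'n \<Rightarrow> bool) \<Rightarrow> nat
    \<Rightarrow> (('n \<times> nat) \<Rightarrow> ('n \<times> nat) \<Rightarrow> bool) \<Rightarrow> bool" where
  "proper_pair V W E T t' G \<longleftrightarrow>
     tailed_dg V W E T \<and> ts_dag V W t' G \<and>
     ((standing_assumption G \<and> is_rolled E T G) \<or> G = unroll V W E T t')"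

definition is_path :: "('v \<Rightarrow> 'v \<Rightarrow> bool) \<Rightarrow> 'v list \<Rightarrow> bool list \<Rightarrow> bool" where
  "is_path G ns ds \<longleftrightarrow> ns \<noteq> [] \<and> distinct ns \<and> length ds = length ns - 1 \<and>
     (\<forall>k < length ds. if ds ! k then G (ns ! k) (ns ! Suc k) else G (ns ! Suc k) (ns ! k))"

definition is_collider :: "bool list \<Rightarrow> nat \<Rightarrow> bool" where
  "is_collider ds k \<longleftrightarrow> ds ! (k - 1) \<and> \<not> ds ! k"

definition anc_plus :: "('v \<Rightarrow> 'v \<Rightarrow> bool) \<Rightarrow> 'v set \<Rightarrow> 'v set" where
  "anc_plus G0 Z = {v. \<exists>z\<in>Z. G0\<^sup>*\<^sup>* v z}"

definition path_blocked :: "('v \<Rightarrow> 'v \<Rightarrow> bool) \<Rightarrow> 'v set \<Rightarrow> 'v list \<Rightarrow> bool list \<Rightarrow> bool" where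
  "path_blocked G0 Z ns ds \<longleftrightarrow>
     (\<exists>k. 0 < k \<and> k < length ns - 1 \<and>
        ((\<not> is_collider ds k \<and> ns ! k \<in> Z) \<or> (is_collider ds k \<and> ns ! k \<notin> anc_plus G0 Z)))"

definition separated :: "('v \<Rightarrow> 'v \<Rightarrow> bool) \<Rightarrow> ('v \<Rightarrow> 'v \<Rightarrow> bool) \<Rightarrow> 'v set \<Rightarrow> 'v set \<Rightarrow> 'v set \<Rightarrow> bool" where
  "separated G G0 X Y Z \<longleftrightarrow>
     (\<forall>ns ds. is_path G ns ds \<and> hd ns \<in> X \<and> last ns \<in> Y \<longrightarrow> path_blocked G0 Z ns ds)"

definition d_sep :: "('v \<Rightarrow> 'v \<Rightarrow> bool) \<Rightarrow> 'v set \<Rightarrow> 'v set \<Rightarrow> 'v set \<Rightarrow> bool" where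
  "d_sep G a b c \<longleftrightarrow> separated G G a b c"

text \<open>delta_sep E A B C: B is delta-separated from A given C in the DG E (= D^-).\<close>
definition delta_sep :: "('v \<Rightarrow> 'v \<Rightarrow> bool) \<Rightarrow> 'v set \<Rightarrow> 'v set \<Rightarrow> 'v set \<Rightarrow> bool" where
  "delta_sep E A B C \<longleftrightarrow> separated (\<lambda>i j. E i j \<and> i \<notin> B) E A B C"

definition gen_sa :: "'a measure \<Rightarrow> ('i \<Rightarrow> 'b measure) \<Rightarrow> ('i \<Rightarrow> 'a \<Rightarrow> 'b) \<Rightarrow> 'i set \<Rightarrow> 'a measure" where
  "gen_sa M N X I = sigma (space M) (\<Union>i\<in>I. {X i -` S \<inter> space M | S. S \<in> sets (N i)})"

definition cond_indep :: "'a measure \<Rightarrow> ('i \<Rightarrow> 'b measure) \<Rightarrow> ('i \<Rightarrow> 'a \<Rightarrow> 'b) \<Rightarrow> 'i set \<Rightarrow> 'i set \<Rightarrow> 'i set \<Rightarrow> bool" where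
  "cond_indep M N X I J K \<longleftrightarrow>
     (\<forall>a\<in>sets (gen_sa M N X I). \<forall>b\<in>sets (gen_sa M N X J).
        AE x in M. real_cond_exp M (gen_sa M N X K) (indicator (a \<inter> b) :: 'a \<Rightarrow> real) x =
          real_cond_exp M (gen_sa M N X K) (indicator a) x * real_cond_exp M (gen_sa M N X K) (indicator b) x)"

definition dsep_markov :: "'a measure \<Rightarrow> ('v \<Rightarrow> 'b measure) \<Rightarrow> ('v \<Rightarrow> 'a \<Rightarrow> 'b) \<Rightarrow> 'v set \<Rightarrow> ('v \<Rightarrow> 'v \<Rightarrow> bool) \<Rightarrow> bool" where
  "dsep_markov M N X Nodes G \<longleftrightarrow>
     (\<forall>a b c. a \<subseteq> Nodes \<and> b \<subseteq> Nodes \<and> c \<subseteq> Nodes \<and> a \<inter> b = {} \<and> a \<inter> c = {} \<and> b \<inter> c = {} \<and>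
        d_sep G a b c \<longrightarrow> cond_indep M N X a b c)"

definition past :: "'n set \<Rightarrow> 'n set \<Rightarrow> 'n set \<Rightarrow> nat \<Rightarrow> ('n \<times> nat) set" where
  "past V W A u = {(i, s). i \<in> A \<and> ((i \<in> V \<and> s \<le> u) \<or> (i \<in> W \<and> s = 0))}"

definition locally_indep :: "'n set \<Rightarrow> 'n set \<Rightarrow> 'a measure \<Rightarrow> ('n \<times> nat \<Rightarrow> 'b measure) \<Rightarrow> ('n \<times> nat \<Rightarrow> 'a \<Rightarrow> 'b)
    \<Rightarrow> 'n set \<Rightarrow> 'n set \<Rightarrow> 'n set \<Rightarrow> nat \<Rightarrow> bool" where
  "locally_indep V W M N X A B C t' \<longleftrightarrow>
     (\<forall>t\<in>{1..t'}. cond_indep M N X (past V W A (t - 1)) {(j, t) | j. j \<in> B} (past V W (B \<union> C) (t - 1)))"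

end

theory Submission
  imports Defs
begin

text \<open>
  Suppose a path of the unrolled DAG from the past of \<open>A\<close> to \<open>B\<close> at time \<open>t\<close> were d-connecting
  given the past of \<open>B \<union> C\<close>. Its colliders are ancestors of the conditioning set, hence lie before
  time \<open>t\<close>; so once the path reaches time \<open>t\<close> it can only proceed forward along contemporaneous
  edges, and all its nodes at time \<open>t\<close> are tailed ancestors of \<open>B\<close>. Forgetting time maps the path
  to a walk in \<open>D\<close>. Cut it at its first node in \<open>B' = (an\<^sub>\<bullet>(B) \<inter> V \<inter> C) \<union> B\<close>, which is
  entered by an edge pointing into \<open>B'\<close>: its noncolliders avoid \<open>C' = C - an\<^sub>\<bullet>(B) \<inter> V\<close> and its
  colliders are ancestors of \<open>C' \<union> B\<close>. If some collider is no ancestor of \<open>C'\<close>, continue from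
  the first such collider along a directed path into \<open>B'\<close>. Shortcutting repetitions yields a
  path in \<open>D\<close> without edges out of \<open>B'\<close> that is d-connecting given \<open>C'\<close>, contradicting
  \<open>\<delta>\<close>-separation.
\<close>

section \<open>Walks and d-connection\<close>

definition walk :: "('v \<Rightarrow> 'v \<Rightarrow> bool) \<Rightarrow> 'v list \<Rightarrow> bool list \<Rightarrow> bool" where
  "walk G ns ds \<longleftrightarrow> ns \<noteq> [] \<and> length ds = length ns - 1 \<and>
     (\<forall>k < length ds. if ds ! k then G (ns ! k) (ns ! Suc k) else G (ns ! Suc k) (ns ! k))"

definition d_connecting :: "('v \<Rightarrow> 'v \<Rightarrow> bool) \<Rightarrow> 'v set \<Rightarrow> 'v list \<Rightarrow> bool list \<Rightarrow> bool" where
  "d_connecting G0 Z ns ds \<longleftrightarrow> (\<forall>k. 0 < k \<and> k < length ns - 1 \<longrightarrow>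
      (\<not> is_collider ds k \<longrightarrow> ns ! k \<notin> Z) \<and> (is_collider ds k \<longrightarrow> ns ! k \<in> anc_plus G0 Z))"

lemma is_path_iff_walk: "is_path G ns ds \<longleftrightarrow> walk G ns ds \<and> distinct ns"
  by (auto simp: is_path_def walk_def)

lemma d_connecting_iff_not_blocked: "d_connecting G0 Z ns ds \<longleftrightarrow> \<not> path_blocked G0 Z ns ds"
  by (auto simp: d_connecting_def path_blocked_def)

lemma walk_edge:
  "walk G ns ds \<Longrightarrow> k < length ns - 1 \<Longrightarrow>
     (if ds ! k then G (ns ! k) (ns ! Suc k) else G (ns ! Suc k) (ns ! k))"
  by (simp add: walk_def)

lemma anc_plus_edge: "G0 u v \<Longrightarrow> v \<in> anc_plus G0 Z \<Longrightarrow> u \<in> anc_plus G0 Z"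
  by (auto simp: anc_plus_def intro: converse_rtranclp_into_rtranclp)

lemma anc_plus_rtranclp: "G0\<^sup>*\<^sup>* u v \<Longrightarrow> v \<in> anc_plus G0 Z \<Longrightarrow> u \<in> anc_plus G0 Z"
  by (auto simp: anc_plus_def intro: rtranclp_trans)

lemma anc_plus_mono: "Z \<subseteq> Z' \<Longrightarrow> anc_plus G0 Z \<subseteq> anc_plus G0 Z'"
  by (auto simp: anc_plus_def)

lemma anc_plus_Un: "anc_plus G0 (Z \<union> Z') = anc_plus G0 Z \<union> anc_plus G0 Z'"
  by (auto simp: anc_plus_def)

text \<open>Following the forward edges from \<open>i\<close> one reaches a collider before the backward edge
  at \<open>q\<close>.\<close>
lemma d_connecting_forward_anc:
  assumes walk: "walk G ns ds" and conn: "d_connecting G0 Z ns ds" and "G \<le> G0"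
    and "0 < i" "ds ! i" "i < q" "q < length ns - 1" "\<not> ds ! q"
  shows "ns ! i \<in> anc_plus G0 Z"
  using assms(4-)
proof (induction "q - i" arbitrary: i rule: less_induct)
  case less
  have edge: "G0 (ns ! i) (ns ! Suc i)"
    using walk_edge[OF walk, of i] less.prems \<open>G \<le> G0\<close> by auto
  have "ns ! Suc i \<in> anc_plus G0 Z"
  proof (cases "ds ! Suc i")
    case False
    then have "is_collider ds (Suc i)" using less.prems by (simp add: is_collider_def)
    then show ?thesis using conn less.prems unfolding d_connecting_def by auto
  next
    case True
    then have "Suc i < q" using less.prems by (metis Suc_lessI)
    then show ?thesis using less True by auto
  qed
  with edge show ?case by (rule anc_plus_edge)
qed

lemma nth_take_append_drop:
  assumes "i \<le> k" "k \<le> length xs" "l < i + (length xs - k)"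
  shows "(take i xs @ drop k xs) ! l = (if l < i then xs ! l else xs ! (l - i + k))"
  using assms by (auto simp: nth_append add.commute)

lemma walk_shortcut:
  assumes walk: "walk G ns ds" and "i < k" "k < length ns"
    and same: "ns ! i = ns ! k"
  shows "walk G (take i ns @ drop k ns) (take i ds @ drop k ds)"
    (is "walk G ?ns ?ds")
  unfolding walk_def
proof (intro conjI allI impI)
  have lds: "length ds = length ns - 1" using walk by (simp add: walk_def)
  show "?ns \<noteq> []" using assms by simp
  show len: "length ?ds = length ?ns - 1" using assms lds by simp
  fix l assume l: "l < length ?ds"
  have nsl: "?ns ! m = (if m < i then ns ! m else ns ! (m - i + k))" if "m \<le> Suc l" for m
    using that l len assms by (intro nth_take_append_drop) auto
  have dsl: "?ds ! l = (if l < i then ds ! l else ds ! (l - i + k))"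
    using l lds assms by (intro nth_take_append_drop) auto
  show "if ?ds ! l then G (?ns ! l) (?ns ! Suc l) else G (?ns ! Suc l) (?ns ! l)"
  proof (cases "l < i")
    case True
    have "?ns ! Suc l = ns ! Suc l"
      using nsl[of "Suc l"] True same by (cases "Suc l = i") auto
    then show ?thesis
      using walk_edge[OF walk, of l] nsl[of l] dsl True assms by auto
  next
    case False
    then show ?thesis
      using walk_edge[OF walk, of "l - i + k"] nsl[of l] nsl[of "Suc l"] dsl l lds assms
      by (auto simp: Suc_diff_le)
  qed
qed

text \<open>The node at which a closed subwalk from position \<open>i\<close> to position \<open>k\<close> is cut out stays
  d-connecting between the edge entering \<open>i\<close> and the edge leaving \<open>k\<close>.\<close>
lemma d_connecting_junction:
  assumes walk: "walk G ns ds" and conn: "d_connecting G0 Z ns ds" and "G \<le> G0"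
    and "0 < i" "i < k" "k < length ns - 1" and same: "ns ! i = ns ! k"
  shows "(\<not> (ds ! (i - 1) \<and> \<not> ds ! k) \<longrightarrow> ns ! i \<notin> Z) \<and>
    (ds ! (i - 1) \<and> \<not> ds ! k \<longrightarrow> ns ! i \<in> anc_plus G0 Z)"
proof (intro conjI impI)
  have conn_at: "\<And>m. 0 < m \<Longrightarrow> m < length ns - 1 \<Longrightarrow>
      (\<not> is_collider ds m \<longrightarrow> ns ! m \<notin> Z) \<and> (is_collider ds m \<longrightarrow> ns ! m \<in> anc_plus G0 Z)"
    using conn by (simp add: d_connecting_def)
  show "ns ! i \<notin> Z" if "\<not> (ds ! (i - 1) \<and> \<not> ds ! k)"
    using that conn_at[of i] conn_at[of k] same assms(4-6) by (auto simp: is_collider_def)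
  assume col: "ds ! (i - 1) \<and> \<not> ds ! k"
  show "ns ! i \<in> anc_plus G0 Z"
  proof (cases "ds ! i")
    case False
    then show ?thesis using col conn_at[of i] assms(4-6) by (simp add: is_collider_def)
  next
    case True
    with col show ?thesis using d_connecting_forward_anc[OF walk conn \<open>G \<le> G0\<close>] assms(4-6) by simp
  qed
qed

lemma d_connecting_shortcut:
  assumes walk: "walk G ns ds" and conn: "d_connecting G0 Z ns ds" and "G \<le> G0"
    and "i < k" "k < length ns" and same: "ns ! i = ns ! k"
  shows "d_connecting G0 Z (take i ns @ drop k ns) (take i ds @ drop k ds)"
    (is "d_connecting G0 Z ?ns ?ds")
  unfolding d_connecting_def
proof (intro allI impI)
  fix l assume l: "0 < l \<and> l < length ?ns - 1"
  have lds: "length ds = length ns - 1" using walk by (simp add: walk_def)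
  have conn_at: "\<And>m. 0 < m \<Longrightarrow> m < length ns - 1 \<Longrightarrow>
      (\<not> is_collider ds m \<longrightarrow> ns ! m \<notin> Z) \<and> (is_collider ds m \<longrightarrow> ns ! m \<in> anc_plus G0 Z)"
    using conn by (simp add: d_connecting_def)
  have nsl: "?ns ! l = (if l < i then ns ! l else ns ! (l - i + k))"
    using l assms by (intro nth_take_append_drop) auto
  have dsl: "?ds ! m = (if m < i then ds ! m else ds ! (m - i + k))" if "m \<le> l" for m
    using that l lds assms by (intro nth_take_append_drop) auto
  consider "l < i" | "i < l" | "l = i" by linarith
  then show "(\<not> is_collider ?ds l \<longrightarrow> ?ns ! l \<notin> Z) \<and> (is_collider ?ds l \<longrightarrow> ?ns ! l \<in> anc_plus G0 Z)"
  proof cases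
    case 1
    then have "is_collider ?ds l = is_collider ds l"
      using dsl[of l] dsl[of "l - 1"] by (auto simp: is_collider_def)
    then show ?thesis using conn_at[of l] nsl l 1 assms by auto
  next
    case 2
    then have "is_collider ?ds l = is_collider ds (l - i + k)"
      using dsl[of l] dsl[of "l - 1"] by (simp add: is_collider_def Suc_diff_le)
    then show ?thesis using conn_at[of "l - i + k"] nsl l 2 assms by auto
  next
    case 3
    then have "is_collider ?ds l = (ds ! (i - 1) \<and> \<not> ds ! k)" "?ns ! l = ns ! i"
      using nsl dsl[of l] dsl[of "l - 1"] l same by (auto simp: is_collider_def)
    moreover have "k < length ns - 1" using l 3 assms by auto
    ultimately show ?thesis
      using d_connecting_junction[OF walk conn \<open>G \<le> G0\<close> _ \<open>i < k\<close> _ same] l 3 by simp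
  qed
qed

lemma d_connecting_walk_to_path:
  assumes "walk G ns ds" "d_connecting G0 Z ns ds" "G \<le> G0"
  obtains ns' ds' where "is_path G ns' ds'" "d_connecting G0 Z ns' ds'"
    "hd ns' = hd ns" "last ns' = last ns"
  using assms
proof (induction "length ns" arbitrary: ns ds rule: less_induct)
  case less
  show ?case
  proof (cases "distinct ns")
    case True
    then show ?thesis using less.prems by (auto simp: is_path_iff_walk)
  next
    case False
    then obtain i k where ik: "i < k" "k < length ns" "ns ! i = ns ! k"
      by (metis distinct_conv_nth linorder_neqE_nat)
    let ?ns = "take i ns @ drop k ns" and ?ds = "take i ds @ drop k ds"
    have "ns \<noteq> []" using ik by auto
    then have "hd ?ns = hd ns"
      using ik by (cases "i = 0") (auto simp: hd_drop_conv_nth hd_conv_nth nth_append)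
    moreover have "last ?ns = last ns" using ik by simp
    moreover have "length ?ns < length ns" using ik by simp
    moreover have "walk G ?ns ?ds" using walk_shortcut ik less.prems(2) by blast
    moreover have "d_connecting G0 Z ?ns ?ds" using d_connecting_shortcut ik less.prems(2-4) by blast
    ultimately show ?thesis using less.hyps less.prems(1,4) by metis
  qed
qed

lemma separated_no_d_connecting_walk:
  assumes "separated G G0 X Y Z" "G \<le> G0" "walk G ns ds" "d_connecting G0 Z ns ds"
    "hd ns \<in> X" "last ns \<in> Y"
  shows False
  using d_connecting_walk_to_path[OF assms(3,4,2)] assms(1,5,6)
  by (auto simp: separated_def d_connecting_iff_not_blocked)

lemma walk_take:
  assumes "walk G ns ds" "p < length ns"
  shows "walk G (take (Suc p) ns) (take p ds)"
  using assms by (auto simp: walk_def)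

lemma append_tl_eq_butlast_append:
  assumes "ns \<noteq> []" "us \<noteq> []" "last ns = hd us"
  shows "ns @ tl us = butlast ns @ us"
proof -
  have "ns @ tl us = butlast ns @ [last ns] @ tl us" using assms(1) by simp
  also have "\<dots> = butlast ns @ us" using assms(2,3) by simp
  finally show ?thesis .
qed

lemma nth_append_tl:
  assumes "ns \<noteq> []" "last ns = hd us" "m < length us"
  shows "(ns @ tl us) ! (length ns - 1 + m) = us ! m"
proof -
  have "us \<noteq> []" using assms(3) by auto
  then have "ns @ tl us = butlast ns @ us"
    using append_tl_eq_butlast_append assms(1,2) by blast
  moreover have "length ns - 1 = length (butlast ns)" by simp
  ultimately show ?thesis by (simp only: nth_append_length_plus)
qed

lemma walk_append:
  assumes walk1: "walk G ns ds" and walk2: "walk G ms es" and "last ns = hd ms"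
  shows "walk G (ns @ tl ms) (ds @ es)"
  unfolding walk_def
proof (intro conjI allI impI)
  have len: "length ns = Suc (length ds)" "length ms = Suc (length es)"
    using walk1 walk2 by (auto simp: walk_def)
  then have ne: "ns \<noteq> []" "ms \<noteq> []" by auto
  then show "ns @ tl ms \<noteq> []" by simp
  show "length (ds @ es) = length (ns @ tl ms) - 1" using len by simp
  have joint: "(ns @ tl ms) ! (length ds + m) = ms ! m" if "m \<le> length es" for m
    using nth_append_tl[OF ne(1) \<open>last ns = hd ms\<close>, of m] that len by simp
  fix l assume l: "l < length (ds @ es)"
  show "if (ds @ es) ! l then G ((ns @ tl ms) ! l) ((ns @ tl ms) ! Suc l)
        else G ((ns @ tl ms) ! Suc l) ((ns @ tl ms) ! l)"
  proof (cases "l < length ds")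
    case True
    then show ?thesis
      using walk_edge[OF walk1, of l] joint[of 0] len by (auto simp: nth_append)
  next
    case False
    define m where "m = l - length ds"
    have m: "l = length ds + m" "m < length es" using False l by (auto simp: m_def)
    then show ?thesis
      using walk_edge[OF walk2, of m] joint[of m] joint[of "Suc m"] len
      by (simp add: nth_append)
  qed
qed

lemma rtranclp_first_entry:
  assumes "E\<^sup>*\<^sup>* u z" "z \<in> S" "u \<notin> S"
  obtains us where "walk E us (replicate (length us - 1) True)" "hd us = u" "last us \<in> S"
    "\<forall>x\<in>set (butlast us). x \<notin> S" "\<forall>x\<in>set us. E\<^sup>*\<^sup>* u x"
proof -
  from assms have "\<exists>us. walk E us (replicate (length us - 1) True) \<and> hd us = u \<and> last us \<in> S \<and>
      (\<forall>x\<in>set (butlast us). x \<notin> S) \<and> (\<forall>x\<in>set us. E\<^sup>*\<^sup>* u x)"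
  proof (induction rule: converse_rtranclp_induct)
    case base
    then show ?case by simp
  next
    case (step y v)
    have edge: "walk E [y, v] [True]" using step.hyps(1) by (simp add: walk_def)
    show ?case
    proof (cases "v \<in> S")
      case True
      with edge step show ?thesis by (intro exI[of _ "[y, v]"]) auto
    next
      case False
      then obtain us where us: "walk E us (replicate (length us - 1) True)" "hd us = v" "last us \<in> S"
        "\<forall>x\<in>set (butlast us). x \<notin> S" "\<forall>x\<in>set us. E\<^sup>*\<^sup>* v x"
        using step by blast
      have ne: "us \<noteq> []" using us(1) by (simp add: walk_def)
      then have "us = v # tl us" using us(2) by (cases us) auto
      then have "[y, v] @ tl us = y # us" by simp
      moreover have "[True] @ replicate (length us - 1) True = replicate (length (y # us) - 1) True"
        using ne by (cases us) auto
      ultimately have "walk E (y # us) (replicate (length (y # us) - 1) True)"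
        using walk_append[OF edge us(1)] us(2) by simp
      moreover have "butlast (y # us) = y # butlast us" using ne by simp
      ultimately show ?thesis
        using us ne step by (intro exI[of _ "y # us"])
          (auto intro: converse_rtranclp_into_rtranclp)
    qed
  qed
  then show ?thesis using that by blast
qed

lemma d_connecting_take_iff:
  assumes "m < length ns" "length ds = length ns - 1"
  shows "d_connecting G0 Z (take (Suc m) ns) (take m ds) \<longleftrightarrow>
    (\<forall>k. 0 < k \<and> k < m \<longrightarrow>
      (\<not> is_collider ds k \<longrightarrow> ns ! k \<notin> Z) \<and> (is_collider ds k \<longrightarrow> ns ! k \<in> anc_plus G0 Z))"
proof -
  have "is_collider (take m ds) k = is_collider ds k" if "0 < k" "k < m" for k
    using that by (simp add: is_collider_def)
  moreover have "length (take (Suc m) ns) - 1 = m" using assms by simp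
  ultimately show ?thesis by (auto simp: d_connecting_def)
qed

lemma d_connecting_append_directed:
  assumes conn: "d_connecting G0 Z ns ds" and len: "length ds = length ns - 1" "ns \<noteq> []"
    and join: "last ns = hd us" and reach: "\<forall>x\<in>set us. G0\<^sup>*\<^sup>* (hd us) x"
    and "hd us \<notin> anc_plus G0 Z"
  shows "d_connecting G0 Z (ns @ tl us) (ds @ replicate (length us - 1) True)"
  unfolding d_connecting_def
proof (intro allI impI)
  fix k assume k: "0 < k \<and> k < length (ns @ tl us) - 1"
  let ?ds = "ds @ replicate (length us - 1) True"
  show "(\<not> is_collider ?ds k \<longrightarrow> (ns @ tl us) ! k \<notin> Z) \<and>
        (is_collider ?ds k \<longrightarrow> (ns @ tl us) ! k \<in> anc_plus G0 Z)"
  proof (cases "k < length ns - 1")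
    case True
    then have "is_collider ?ds k = is_collider ds k" "(ns @ tl us) ! k = ns ! k"
      using len by (auto simp: is_collider_def nth_append)
    moreover have "(\<not> is_collider ds k \<longrightarrow> ns ! k \<notin> Z) \<and> (is_collider ds k \<longrightarrow> ns ! k \<in> anc_plus G0 Z)"
      using conn k True unfolding d_connecting_def by blast
    ultimately show ?thesis by simp
  next
    case False
    define m where "m = k - length ds"
    have m: "k = length ds + m" "m < length us - 1"
      using k False len by (auto simp: m_def)
    then have "?ds ! k" by (simp add: nth_append)
    then have noncollider: "\<not> is_collider ?ds k" by (simp add: is_collider_def)
    have node: "(ns @ tl us) ! k = us ! m"
      using nth_append_tl[OF len(2) join, of m] m len(1) by simp
    have "(ns @ tl us) ! k \<notin> Z"
    proof
      assume "(ns @ tl us) ! k \<in> Z"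
      then have "us ! m \<in> anc_plus G0 Z" unfolding node anc_plus_def by blast
      moreover have "G0\<^sup>*\<^sup>* (hd us) (us ! m)" using reach m(2) by simp
      ultimately show False
        using anc_plus_rtranclp[of G0 "hd us" "us ! m" Z] \<open>hd us \<notin> anc_plus G0 Z\<close> by blast
    qed
    with noncollider show ?thesis by blast
  qed
qed

lemma walk_node_on_edge:
  assumes walk: "walk G ns ds" and "1 < length ns" "k < length ns"
  obtains y where "G (ns ! k) y \<or> G y (ns ! k)"
proof (cases "k < length ns - 1")
  case True
  then show ?thesis using walk_edge[OF walk True] that by (cases "ds ! k") auto
next
  case False
  then have "k = Suc (k - 1)" "k - 1 < length ns - 1" using assms by auto
  then show ?thesis using walk_edge[OF walk \<open>k - 1 < length ns - 1\<close>] that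
    by (cases "ds ! (k - 1)") (metis, metis)
qed

section \<open>Consequences of \<open>\<delta>\<close>-separation\<close>

lemma delta_sep_no_d_connecting_entry_walk:
  assumes sep: "delta_sep E A S Z" and walk: "walk E ws vs" and conn: "d_connecting E Z ws vs"
    and "hd ws \<in> A" "last ws \<in> S" and before: "\<forall>x\<in>set (butlast ws). x \<notin> S"
    and "vs \<noteq> []" "last vs"
  shows False
proof -
  let ?E' = "\<lambda>i j. E i j \<and> i \<notin> S"
  have len: "length vs = length ws - 1" using walk by (simp add: walk_def)
  have before_nth: "ws ! l \<notin> S" if "l < length ws - 1" for l
  proof -
    have "ws ! l = butlast ws ! l" using that by (simp add: nth_butlast)
    moreover have "butlast ws ! l \<in> set (butlast ws)" using that by simp
    ultimately show ?thesis using before by auto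
  qed
  have "walk ?E' ws vs"
    unfolding walk_def
  proof (intro conjI allI impI)
    show "ws \<noteq> []" "length vs = length ws - 1" using walk by (simp_all add: walk_def)
    fix l assume l: "l < length vs"
    have "\<not> vs ! l \<Longrightarrow> l \<noteq> length vs - 1"
      using \<open>vs \<noteq> []\<close> \<open>last vs\<close> by (auto simp: last_conv_nth)
    then have "if vs ! l then ws ! l \<notin> S else ws ! Suc l \<notin> S"
      using before_nth l len by auto
    then show "if vs ! l then ?E' (ws ! l) (ws ! Suc l) else ?E' (ws ! Suc l) (ws ! l)"
      using walk_edge[OF walk, of l] l len by auto
  qed
  moreover have "?E' \<le> E" by auto
  ultimately show False
    using separated_no_d_connecting_walk sep conn assms(4,5) by (fastforce simp: delta_sep_def)
qed

text \<open>Extend the walk by a directed path to \<open>S\<close>; since the last node is no ancestor of \<open>Z\<close>,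
  none of the new nodes lies in \<open>Z\<close>.\<close>
lemma delta_sep_no_d_connecting_walk_to_anc:
  assumes sep: "delta_sep E A S Z" and walk: "walk E ws vs" and conn: "d_connecting E Z ws vs"
    and "hd ws \<in> A" and avoid: "\<forall>x\<in>set ws. x \<notin> S"
    and anc: "last ws \<in> anc_plus E S" "last ws \<notin> anc_plus E Z"
  shows False
proof -
  obtain z where "E\<^sup>*\<^sup>* (last ws) z" "z \<in> S" using anc(1) by (auto simp: anc_plus_def)
  moreover have "ws \<noteq> []" using walk by (simp add: walk_def)
  then have "last ws \<notin> S" using avoid by simp
  ultimately obtain us where us: "walk E us (replicate (length us - 1) True)" "hd us = last ws"
    "last us \<in> S" "\<forall>x\<in>set (butlast us). x \<notin> S" "\<forall>x\<in>set us. E\<^sup>*\<^sup>* (last ws) x"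
    by (rule rtranclp_first_entry)
  have "us \<noteq> []" using us(1) by (simp add: walk_def)
  have "tl us \<noteq> []" using us(2,3) \<open>last ws \<notin> S\<close> \<open>us \<noteq> []\<close> by (cases us) auto
  have len: "length vs = length ws - 1" using walk by (simp add: walk_def)
  let ?ws = "ws @ tl us" and ?vs = "vs @ replicate (length us - 1) True"
  have "walk E ?ws ?vs" using walk_append[OF walk us(1)] us(2) by simp
  moreover have "d_connecting E Z ?ws ?vs"
    using d_connecting_append_directed[OF conn len \<open>ws \<noteq> []\<close>] us(2,5) anc(2) by simp
  moreover have "hd ?ws \<in> A" using \<open>hd ws \<in> A\<close> \<open>ws \<noteq> []\<close> by simp
  moreover have "last ?ws \<in> S" using us(3) \<open>tl us \<noteq> []\<close> by (simp add: last_tl)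
  moreover have "\<forall>x\<in>set (butlast ?ws). x \<notin> S"
  proof -
    have "?ws = butlast ws @ us"
      using append_tl_eq_butlast_append[OF \<open>ws \<noteq> []\<close> \<open>us \<noteq> []\<close>] us(2) by simp
    then have "set (butlast ?ws) \<subseteq> set ws \<union> set (butlast us)"
      using \<open>us \<noteq> []\<close> by (auto simp: butlast_append dest: in_set_butlastD)
    then show ?thesis using avoid us(4) by blast
  qed
  moreover have "?vs \<noteq> []" "last ?vs" using \<open>tl us \<noteq> []\<close> by (cases us; simp)+
  ultimately show False by (rule delta_sep_no_d_connecting_entry_walk[OF sep])
qed

text \<open>The walk first meets \<open>S\<close> at position \<open>p\<close>, through an edge pointing into \<open>S\<close>. Either
  it is d-connecting up to \<open>p\<close>, or its first collider outside \<open>an(Z)\<close> is an ancestor of \<open>S\<close>.\<close>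
lemma delta_sep_no_entry_walk:
  assumes sep: "delta_sep E A S Z" and walk: "walk E ws vs" and "hd ws \<in> A"
    and p: "0 < p" "p < length ws" "ws ! p \<in> S" and before: "\<forall>l<p. ws ! l \<notin> S"
    and entry: "vs ! (p - 1)"
    and noncol: "\<And>k. 0 < k \<Longrightarrow> k < p \<Longrightarrow> \<not> is_collider vs k \<Longrightarrow> ws ! k \<notin> Z"
    and col: "\<And>k. 0 < k \<Longrightarrow> k < p \<Longrightarrow> is_collider vs k \<Longrightarrow> ws ! k \<in> anc_plus E (Z \<union> S)"
  shows False
proof -
  have len: "length vs = length ws - 1" using walk by (simp add: walk_def)
  have hd_take: "hd (take (Suc m) ws) = hd ws" for m using p by (cases ws) auto
  have last_take: "last (take (Suc m) ws) = ws ! m" if "m < length ws" for m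
    using that by (simp add: take_Suc_conv_app_nth)
  let ?bad = "\<lambda>k. 0 < k \<and> k < p \<and> is_collider vs k \<and> ws ! k \<notin> anc_plus E Z"
  show False
  proof (cases "\<exists>k. ?bad k")
    case False
    then have "d_connecting E Z (take (Suc p) ws) (take p vs)"
      using noncol col p len by (auto simp: d_connecting_take_iff)
    moreover have "\<forall>x\<in>set (butlast (take (Suc p) ws)). x \<notin> S"
      using before p by (auto simp: butlast_take in_set_conv_nth)
    moreover have "take p vs \<noteq> []" using p len by auto
    moreover from this have "last (take p vs)"
      using p len entry by (simp add: last_conv_nth min_absorb2)
    ultimately show False
      using delta_sep_no_d_connecting_entry_walk[OF sep walk_take[OF walk p(2)]]
        hd_take last_take p \<open>hd ws \<in> A\<close> by simp
  next
    case True
    define q where "q = (LEAST k. ?bad k)"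
    have q: "0 < q" "q < p" "is_collider vs q" "ws ! q \<notin> anc_plus E Z"
      using LeastI_ex[OF True] by (simp_all add: q_def)
    have "d_connecting E Z (take (Suc q) ws) (take q vs)"
      using noncol col not_less_Least[of _ ?bad] q p len
      by (auto simp: d_connecting_take_iff q_def anc_plus_Un)
    moreover have "\<forall>x\<in>set (take (Suc q) ws). x \<notin> S"
      using before q(2) by (auto simp: in_set_conv_nth)
    moreover have "ws ! q \<in> anc_plus E S" using col[OF q(1,2,3)] q(4) by (simp add: anc_plus_Un)
    moreover have "q < length ws" using q(2) p(2) by simp
    ultimately show False
      using delta_sep_no_d_connecting_walk_to_anc[OF sep walk_take[OF walk \<open>q < length ws\<close>]]
        hd_take last_take q(4) \<open>hd ws \<in> A\<close> by simp
  qed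
qed

section \<open>Unrolled graphs\<close>

lemma rtranclp_tailed_an: "T\<^sup>*\<^sup>* u j \<Longrightarrow> j \<in> B \<Longrightarrow> u \<in> B \<union> tailed_an T B"
  by (auto simp: tailed_an_def dest: rtranclpD)

lemma anc_plus_tailed_an:
  assumes "\<And>i j. T i j \<Longrightarrow> E i j"
  shows "anc_plus E (tailed_an T B) \<subseteq> anc_plus E B"
proof
  fix u assume "u \<in> anc_plus E (tailed_an T B)"
  then obtain k j where "E\<^sup>*\<^sup>* u k" "T\<^sup>+\<^sup>+ k j" "j \<in> B"
    by (auto simp: anc_plus_def tailed_an_def)
  moreover from \<open>T\<^sup>+\<^sup>+ k j\<close> have "E\<^sup>*\<^sup>* k j"
    by (induction rule: tranclp_induct) (auto intro: rtranclp.rtrancl_into_rtrancl assms)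
  ultimately show "u \<in> anc_plus E B"
    using rtranclp_trans[of E u k j] by (auto simp: anc_plus_def)
qed

locale time_projection =
  fixes G :: "('n \<times> nat) \<Rightarrow> ('n \<times> nat) \<Rightarrow> bool" and E T :: "'n \<Rightarrow> 'n \<Rightarrow> bool"
  assumes edge_fst: "G x y \<Longrightarrow> E (fst x) (fst y)"
    and edge_time_mono: "G x y \<Longrightarrow> snd x \<le> snd y"
    and edge_same_time: "G x y \<Longrightarrow> snd x = snd y \<Longrightarrow> T (fst x) (fst y)"
    and tailed_edge: "T i j \<Longrightarrow> E i j"
begin

lemma rtranclp_fst: "G\<^sup>*\<^sup>* x y \<Longrightarrow> E\<^sup>*\<^sup>* (fst x) (fst y)"
  by (induction rule: rtranclp_induct) (auto intro: rtranclp.rtrancl_into_rtrancl edge_fst)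

lemma rtranclp_time_mono: "G\<^sup>*\<^sup>* x y \<Longrightarrow> snd x \<le> snd y"
  by (induction rule: rtranclp_induct) (auto dest: edge_time_mono)

lemma walk_map_fst: "walk G ns ds \<Longrightarrow> walk E (map fst ns) ds"
  by (auto simp: walk_def edge_fst)

lemma collider_time_before:
  assumes "d_connecting G c ns ds" "\<forall>z\<in>c. snd z < t"
    and "0 < k" "k < length ns - 1" "is_collider ds k"
  shows "snd (ns ! k) < t"
proof -
  obtain z where "z \<in> c" "G\<^sup>*\<^sup>* (ns ! k) z"
    using assms unfolding d_connecting_def anc_plus_def by blast
  with assms(2) rtranclp_time_mono[of "ns ! k" z] show ?thesis by fastforce
qed

lemma late_node_entered_forward:
  assumes walk: "walk G ns ds" and conn: "d_connecting G c ns ds" and c: "\<forall>z\<in>c. snd z < t"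
    and start: "snd (hd ns) < t"
  shows "0 < k \<Longrightarrow> k < length ns \<Longrightarrow> t \<le> snd (ns ! k) \<Longrightarrow> ds ! (k - 1)"
proof (induction k)
  case 0
  then show ?case by simp
next
  case (Suc j)
  show ?case
  proof (rule ccontr)
    assume "\<not> ds ! (Suc j - 1)"
    then have backward: "G (ns ! Suc j) (ns ! j)" using walk_edge[OF walk, of j] Suc.prems by auto
    have late: "t \<le> snd (ns ! j)" using edge_time_mono[OF backward] Suc.prems(3) by simp
    show False
    proof (cases "j = 0")
      case True
      then show False using late start walk by (auto simp: walk_def hd_conv_nth)
    next
      case False
      have "j < length ns - 1" using Suc.prems(2) by simp
      then have "\<not> is_collider ds j"
        using collider_time_before[OF conn c, of j] late False by auto
      then have "\<not> ds ! (j - 1)" using \<open>\<not> ds ! (Suc j - 1)\<close> by (simp add: is_collider_def)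
      then show False using Suc.IH late Suc.prems False by simp
    qed
  qed
qed

text \<open>A late node is no collider, so the walk leaves it forward; as time never decreases along
  edges, the rest of the walk stays at time \<open>t\<close> and uses contemporaneous, hence tailed, edges.\<close>

lemma late_node_tailed_to_last:
  assumes walk: "walk G ns ds" and conn: "d_connecting G c ns ds" and c: "\<forall>z\<in>c. snd z < t"
    and start: "snd (hd ns) < t" and finish: "snd (last ns) = t"
  shows "k < length ns \<Longrightarrow> t \<le> snd (ns ! k) \<Longrightarrow>
    snd (ns ! k) = t \<and> T\<^sup>*\<^sup>* (fst (ns ! k)) (fst (last ns))"
proof (induction "length ns - 1 - k" arbitrary: k)
  case 0
  then have "k = length ns - 1" by simp
  then have "ns ! k = last ns" using walk by (simp add: walk_def last_conv_nth)
  then show ?case using finish by simp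
next
  case (Suc d)
  have "0 < k" using Suc.prems start walk by (cases k) (auto simp: walk_def hd_conv_nth)
  have k: "k < length ns - 1" using Suc.hyps by simp
  have "ds ! (k - 1)"
    using late_node_entered_forward[OF walk conn c start \<open>0 < k\<close>] Suc.prems by simp
  moreover have "\<not> is_collider ds k"
    using collider_time_before[OF conn c \<open>0 < k\<close> k] Suc.prems by auto
  ultimately have "ds ! k" by (simp add: is_collider_def)
  then have edge: "G (ns ! k) (ns ! Suc k)" using walk_edge[OF walk k] by simp
  then have "t \<le> snd (ns ! Suc k)" using edge_time_mono[OF edge] Suc.prems(2) by simp
  then have next_late: "snd (ns ! Suc k) = t \<and> T\<^sup>*\<^sup>* (fst (ns ! Suc k)) (fst (last ns))"
    using Suc.hyps(1)[of "Suc k"] Suc.hyps(2) k by simp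
  then have "snd (ns ! k) = t" using edge_time_mono[OF edge] Suc.prems(2) by simp
  moreover have "T (fst (ns ! k)) (fst (ns ! Suc k))"
    using edge_same_time[OF edge] calculation next_late by simp
  ultimately show ?case using next_late converse_rtranclp_into_rtranclp by metis
qed

end

locale connecting_unrolled_walk = time_projection G E T
  for G :: "('n \<times> nat) \<Rightarrow> ('n \<times> nat) \<Rightarrow> bool" and E T +
  fixes V W :: "'n set" and t' :: nat and B C :: "'n set" and t :: nat
    and ns :: "('n \<times> nat) list" and ds :: "bool list"
  assumes nodes: "G x y \<Longrightarrow> x \<in> unrolled_nodes V W t' \<and> y \<in> unrolled_nodes V W t'"
    and VW: "V \<inter> W = {}" and BC: "B \<inter> C = {}" and t: "1 \<le> t"
    and walk: "walk G ns ds" and conn: "d_connecting G (past V W (B \<union> C) (t - 1)) ns ds"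
    and start: "snd (hd ns) < t" and finish: "snd (last ns) = t" "fst (last ns) \<in> B"
begin

lemma past_before: "\<forall>z\<in>past V W (B \<union> C) (t - 1). snd z < t"
  using t by (auto simp: past_def)

lemma one_less_length: "1 < length ns"
  using walk start finish by (cases ns) (auto simp: walk_def)

lemma node_unrolled: "k < length ns \<Longrightarrow> ns ! k \<in> unrolled_nodes V W t'"
  using walk_node_on_edge[OF walk one_less_length] nodes by metis

lemma late_fst:
  assumes "k < length ns" "t \<le> snd (ns ! k)"
  shows "fst (ns ! k) \<in> (B \<union> tailed_an T B) \<inter> V"
proof -
  have "snd (ns ! k) = t" "T\<^sup>*\<^sup>* (fst (ns ! k)) (fst (last ns))"
    using late_node_tailed_to_last[OF walk conn past_before start finish(1)] assms by auto
  moreover have "ns ! k \<in> unrolled_nodes V W t'" using node_unrolled assms(1) .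
  ultimately have "fst (ns ! k) \<in> V" using t by (auto simp: unrolled_nodes_def)
  moreover have "fst (ns ! k) \<in> B \<union> tailed_an T B"
    using rtranclp_tailed_an[OF _ finish(2)] \<open>T\<^sup>*\<^sup>* (fst (ns ! k)) (fst (last ns))\<close> .
  ultimately show ?thesis by blast
qed

lemma noncollider_fst:
  assumes "0 < k" "k < length ns - 1" "\<not> is_collider ds k"
  shows "fst (ns ! k) \<notin> C - tailed_an T B \<inter> V"
proof
  assume C: "fst (ns ! k) \<in> C - tailed_an T B \<inter> V"
  have "ns ! k \<notin> past V W (B \<union> C) (t - 1)"
    using conn assms unfolding d_connecting_def by blast
  moreover have "ns ! k \<in> unrolled_nodes V W t'" using node_unrolled assms(2) by simp
  ultimately have "t \<le> snd (ns ! k)"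
    using C VW by (cases "ns ! k") (auto simp: past_def unrolled_nodes_def)
  moreover have "k < length ns" using assms(2) by simp
  ultimately show False using late_fst[of k] C BC by auto
qed

lemma collider_fst_anc:
  assumes "0 < k" "k < length ns - 1" "is_collider ds k"
  shows "fst (ns ! k) \<in> anc_plus E ((C - tailed_an T B \<inter> V) \<union> B)"
proof -
  let ?Z = "C - tailed_an T B \<inter> V"
  have "ns ! k \<in> anc_plus G (past V W (B \<union> C) (t - 1))"
    using conn assms unfolding d_connecting_def by blast
  then obtain z where z: "z \<in> past V W (B \<union> C) (t - 1)" "G\<^sup>*\<^sup>* (ns ! k) z"
    by (auto simp: anc_plus_def)
  have "fst z \<in> B \<union> C" using z(1) by (auto simp: past_def)
  with rtranclp_fst[OF z(2)] have "fst (ns ! k) \<in> anc_plus E (B \<union> C)"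
    unfolding anc_plus_def by blast
  also have "\<dots> \<subseteq> anc_plus E (?Z \<union> B) \<union> anc_plus E (tailed_an T B)"
    by (auto simp: anc_plus_def)
  also have "\<dots> \<subseteq> anc_plus E (?Z \<union> B)"
    using anc_plus_tailed_an[of T E B, OF tailed_edge] anc_plus_mono[of B "?Z \<union> B" E] by blast
  finally show ?thesis .
qed

lemma entry_forward:
  assumes "0 < k" "k < length ns" "fst (ns ! k) \<in> (tailed_an T B \<inter> V \<inter> C) \<union> B"
  shows "ds ! (k - 1)"
proof (cases "t \<le> snd (ns ! k)")
  case True
  then show ?thesis
    using late_node_entered_forward[OF walk conn past_before start] assms by simp
next
  case False
  then have "ns ! k \<in> past V W (B \<union> C) (t - 1)"
    using assms(3) node_unrolled[OF assms(2)] VW by (cases "ns ! k") (auto simp: past_def unrolled_nodes_def)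
  moreover have "k < length ns - 1"
    using False finish(1) assms(2) walk by (cases "k = length ns - 1") (auto simp: last_conv_nth walk_def)
  ultimately have "is_collider ds k" using conn assms(1) unfolding d_connecting_def by blast
  then show ?thesis by (simp add: is_collider_def)
qed

lemma not_delta_sep:
  assumes "fst (hd ns) \<in> A" "A \<inter> B = {}" "A \<inter> C = {}"
  shows "\<not> delta_sep E A ((tailed_an T B \<inter> V \<inter> C) \<union> B) (C - tailed_an T B \<inter> V)"
proof
  let ?S = "(tailed_an T B \<inter> V \<inter> C) \<union> B" and ?Z = "C - tailed_an T B \<inter> V"
  assume sep: "delta_sep E A ?S ?Z"
  define p where "p = (LEAST k. fst (ns ! k) \<in> ?S)"
  have "fst (ns ! (length ns - 1)) \<in> ?S" using finish(2) walk by (simp add: walk_def last_conv_nth)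
  then have p: "fst (ns ! p) \<in> ?S" "p \<le> length ns - 1"
    unfolding p_def by (fact LeastI, fact Least_le)
  have before: "\<forall>l<p. fst (ns ! l) \<notin> ?S" unfolding p_def using not_less_Least by blast
  have "0 < p" using p(1) assms walk by (cases p) (auto simp: walk_def hd_conv_nth)
  have p_len: "p < length ns" using p(2) one_less_length by simp
  show False
  proof (rule delta_sep_no_entry_walk[OF sep walk_map_fst[OF walk]])
    show "hd (map fst ns) \<in> A" "0 < p" "p < length (map fst ns)" "map fst ns ! p \<in> ?S"
      "\<forall>l<p. map fst ns ! l \<notin> ?S" "ds ! (p - 1)"
      using assms(1) walk p p_len before \<open>0 < p\<close> entry_forward by (auto simp: walk_def hd_map)
  next
    fix k assume "0 < k" "k < p" "\<not> is_collider ds k"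
    then show "map fst ns ! k \<notin> ?Z" using noncollider_fst p p_len by auto
  next
    fix k assume "0 < k" "k < p" "is_collider ds k"
    then have "fst (ns ! k) \<in> anc_plus E (?Z \<union> B)" using collider_fst_anc p by auto
    then show "map fst ns ! k \<in> anc_plus E (?Z \<union> ?S)"
      using anc_plus_mono[of "?Z \<union> B" "?Z \<union> ?S" E] \<open>k < p\<close> p_len by auto
  qed
qed

end

lemma (in time_projection) d_sep_unrolled_past:
  assumes nodes: "\<And>x y. G x y \<Longrightarrow> x \<in> unrolled_nodes V W t' \<and> y \<in> unrolled_nodes V W t'"
    and VW: "V \<inter> W = {}" and t: "1 \<le> t"
    and AB: "A \<inter> B = {}" and AC: "A \<inter> C = {}" and BC: "B \<inter> C = {}"
    and sep: "delta_sep E A ((tailed_an T B \<inter> V \<inter> C) \<union> B) (C - tailed_an T B \<inter> V)"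
  shows "d_sep G (past V W A (t - 1)) {(j, t) | j. j \<in> B} (past V W (B \<union> C) (t - 1))"
  unfolding d_sep_def separated_def
proof (intro allI impI)
  fix ns ds
  assume path: "is_path G ns ds \<and> hd ns \<in> past V W A (t - 1) \<and> last ns \<in> {(j, t) | j. j \<in> B}"
  show "path_blocked G (past V W (B \<union> C) (t - 1)) ns ds"
  proof (rule ccontr)
    assume "\<not> ?thesis"
    then have "d_connecting G (past V W (B \<union> C) (t - 1)) ns ds"
      by (simp add: d_connecting_iff_not_blocked)
    moreover have "walk G ns ds" using path by (simp add: is_path_iff_walk)
    moreover have hd_ns: "snd (hd ns) < t" "fst (hd ns) \<in> A" using path t by (auto simp: past_def)
    moreover have "snd (last ns) = t" "fst (last ns) \<in> B" using path by auto
    ultimately interpret connecting_unrolled_walk G E T V W t' B C t ns ds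
      using nodes VW BC t by unfold_locales
    show False using not_delta_sep[OF hd_ns(2) AB AC] sep by blast
  qed
qed

lemma proper_pair_edge_nodes:
  "proper_pair V W E T t' G \<Longrightarrow> G x y \<Longrightarrow> x \<in> unrolled_nodes V W t' \<and> y \<in> unrolled_nodes V W t'"
  unfolding proper_pair_def ts_dag_def by blast

lemma proper_pair_time_projection:
  assumes "proper_pair V W E T t' G"
  shows "time_projection G E T"
proof
  have tailed: "tailed_dg V W E T" and dag: "ts_dag V W t' G"
    and cases: "(standing_assumption G \<and> is_rolled E T G) \<or> G = unroll V W E T t'"
    using assms unfolding proper_pair_def by blast+
  show TE: "T i j \<Longrightarrow> E i j" for i j using tailed unfolding tailed_dg_def by blast
  fix x y assume edge: "G x y"
  show "snd x \<le> snd y" using dag edge unfolding ts_dag_def by blast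
  show "E (fst x) (fst y)"
    using cases
  proof
    assume "standing_assumption G \<and> is_rolled E T G"
    then show ?thesis
      using edge \<open>snd x \<le> snd y\<close> unfolding is_rolled_def by (metis prod.collapse)
  next
    assume "G = unroll V W E T t'"
    then show ?thesis using edge TE unfolding unroll_def by blast
  qed
  show "T (fst x) (fst y)" if "snd x = snd y"
    using cases
  proof
    assume "standing_assumption G \<and> is_rolled E T G"
    then show ?thesis using edge that unfolding is_rolled_def by (metis prod.collapse)
  next
    assume "G = unroll V W E T t'"
    then show ?thesis using edge that unfolding unroll_def by auto
  qed
qed

lemma past_subset_unrolled_nodes: "u \<le> t' \<Longrightarrow> past V W A u \<subseteq> unrolled_nodes V W t'"
  by (auto simp: past_def unrolled_nodes_def)

theorem theorem1:
  fixes V W :: "'n set" and E T :: "'n \<Rightarrow> 'n \<Rightarrow> bool"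
    and G :: "('n \<times> nat) \<Rightarrow> ('n \<times> nat) \<Rightarrow> bool" and t' :: nat
    and M :: "'a measure" and N :: "'n \<times> nat \<Rightarrow> 'b measure" and X :: "'n \<times> nat \<Rightarrow> 'a \<Rightarrow> 'b"
    and A B C :: "'n set"
  assumes "finite V" and "finite W" and "V \<inter> W = {}"
    and "t' \<ge> 1"
    and "proper_pair V W E T t' G"
    and "prob_space M"
    and "\<forall>v\<in>unrolled_nodes V W t'. X v \<in> measurable M (N v)"
    and "dsep_markov M N X (unrolled_nodes V W t') G"
    and "A \<subseteq> V \<union> W" and "C \<subseteq> V \<union> W" and "B \<subseteq> V"
    and "A \<inter> B = {}" and "A \<inter> C = {}" and "B \<inter> C = {}"
    and "A \<inter> tailed_an T B = {}"
    and "delta_sep E A ((tailed_an T B \<inter> V \<inter> C) \<union> B) (C - (tailed_an T B \<inter> V))"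
  shows "locally_indep V W M N X A B C t'"
  unfolding locally_indep_def
proof
  fix t assume t: "t \<in> {1..t'}"
  let ?a = "past V W A (t - 1)" and ?b = "{(j, t) | j. j \<in> B}" and ?c = "past V W (B \<union> C) (t - 1)"
  have "1 \<le> t" "t - 1 \<le> t'" using t by auto
  have "d_sep G ?a ?b ?c"
    by (rule time_projection.d_sep_unrolled_past[OF proper_pair_time_projection[OF assms(5)]
          proper_pair_edge_nodes[OF assms(5)] assms(3) \<open>1 \<le> t\<close> assms(12-14,16)])
  moreover have "?a \<subseteq> unrolled_nodes V W t'" "?c \<subseteq> unrolled_nodes V W t'"
    by (rule past_subset_unrolled_nodes[OF \<open>t - 1 \<le> t'\<close>])+
  moreover have "?b \<subseteq> unrolled_nodes V W t'" using t assms(11) by (auto simp: unrolled_nodes_def)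
  moreover have "?a \<inter> ?b = {}" using assms(12) by (auto simp: past_def)
  moreover have "?a \<inter> ?c = {}" using assms(12,13) by (auto simp: past_def)
  moreover have "?b \<inter> ?c = {}" using assms(3,11) \<open>1 \<le> t\<close> by (auto simp: past_def)
  ultimately show "cond_indep M N X ?a ?b ?c"
    using assms(8)[unfolded dsep_markov_def, rule_format, of ?a ?b ?c] by simp
qed

end
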